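(* Let $\mathcal G=(\mathcal V,\mathcal E)$ be a connected undirected graph on $\mathcal V=\{1,\dots,N\}$, and fix a node $i\in\{1,\dots,N-1\}$. Let $\widehat q_i$ be the $i$-th entry of the unweighted least-squares estimate $\widehat{\mathbf q}=\mathbf M^{-1}(\mathbf H\odot\widehat{\mathbf D})\mathbf 1$ on $\mathcal G$ (defined in the context). Consider the directed graph $\overrightarrow{\mathcal G}_i=(\mathcal V,\overrightarrow{\mathcal E}_i)$ and the probabilities $\eta_{j\to\ell,i}$ defined in the context, and let $(\check q_j)$ be the solution of the linear system $$\check q_N=0,\qquad \check q_j=\sum_{\ell\in\mathcal N^-_{ji}}(\check q_\ell+\widehat d_{j,\ell})\,\eta_{j\to\ell,i}$$ on $\overrightarrow{\mathcal G}_i$. Then $\widehat q_i=\check q_i$.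
   Context: Setting: $\widehat d_{j,\ell}$, $(j,\ell)\in\mathcal E$, are given real numbers with $\widehat d_{\ell,j}=-\widehat d_{j,\ell}$ (noisy estimates of quality differences $q_j-q_\ell$), and $\widehat{\mathbf D}=\{\widehat d_{j,\ell}\}$. Let $\rho_j$ be the degree of node $j$ in $\mathcal G$; $[\mathbf H]_{j,\ell}=1/\rho_j$ if $j<N$ and $(j,\ell)\in\mathcal E$, $0$ otherwise; $\mathbf M=\mathbf I-\mathbf H$ (invertible); $\odot$ is the Hadamard product and $\mathbf 1$ the all-ones vector. Let $\mathbf T$ be the $(N-1)\times(N-1)$ matrix obtained from $\mathbf H$ by removing its last row and column, and define for $j<N$: $\theta_{j,i}=\frac{[(\mathbf I-\mathbf T)^{-1}]_{i,j}}{\rho_j}$ (the average number of times an edge incident to $j$ is traversed from $j$ by the standard random walk on $\mathcal G$ started at $i$ and stopped at $N$), and $\theta_{N,i}=0$. The directed graph $\overrightarrow{\mathcal G}_i=(\mathcal V,\overrightarrow{\mathcal E}_i)$ has $(j,\ell)\in\overrightarrow{\mathcal E}_i$ iff $(j,\ell)\in\mathcal E$ and either ($j<N$ and $\ell=N$) or ($j<N$, $\ell<N$ and $\theta_{j,i}>\theta_{\ell,i}$). Let $\mathcal N^-_{ji}=\{\ell:(j,\ell)\in\overrightarrow{\mathcal E}_i\}$ (called the in-neighbors of $j$ in the paper). For $\ell\in\mathcal N^-_{ji}$, $\eta_{j\to\ell,i}=\frac{\theta_{j,i}-\theta_{\ell,i}}{\sum_{\ell'\in\mathcal N^-_{ji}}(\theta_{j,i}-\theta_{\ell',i})}$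 (transition probabilities of a biased random walk on $\overrightarrow{\mathcal G}_i$). *)

theory Defs
  imports "Jordan_Normal_Form.Matrix" "Jordan_Normal_Form.Gauss_Jordan_Elimination"
begin

text \<open>Nodes of the graph are 0,...,N-1 (node k here corresponds to node k+1 of the paper);
  the distinguished last node of the paper (node N) is node N-1 here.  These are also
  the row/column indices of the (0-based) matrices.  The undirected graph is given by a
  symmetric irreflexive edge set E.\<close>

definition deg :: "(nat \<times> nat) set \<Rightarrow> nat \<Rightarrow> nat" where
  "deg E j = card {l. (j, l) \<in> E}"

definition Hmat :: "nat \<Rightarrow> (nat \<times> nat) set \<Rightarrow> real mat" where
  "Hmat N E = mat N N (\<lambda>(j, l). if j < N - 1 \<and> (j, l) \<in> E then 1 / real (deg E j) else 0)"

definition Mmat :: "nat \<Rightarrow> (nat \<times> nat) set \<Rightarrow> real mat" where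
  "Mmat N E = 1\<^sub>m N - Hmat N E"

definition hadamard :: "real mat \<Rightarrow> real mat \<Rightarrow> real mat" where
  "hadamard A B = mat (dim_row A) (dim_col A) (\<lambda>(j, l). A $$ (j, l) * B $$ (j, l))"

definition Dmat :: "nat \<Rightarrow> (nat \<Rightarrow> nat \<Rightarrow> real) \<Rightarrow> real mat" where
  "Dmat N d = mat N N (\<lambda>(j, l). d j l)"

definition ones_vec :: "nat \<Rightarrow> real vec" where
  "ones_vec N = vec N (\<lambda>_. 1)"

definition minv :: "real mat \<Rightarrow> real mat" where
  "minv A = the (mat_inverse A)"

definition qhat :: "nat \<Rightarrow> (nat \<times> nat) set \<Rightarrow> (nat \<Rightarrow> nat \<Rightarrow> real) \<Rightarrow> real vec" where
  "qhat N E d = minv (Mmat N E) *\<^sub>v (hadamard (Hmat N E) (Dmat N d) *\<^sub>v ones_vec N)"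

definition Tmat :: "nat \<Rightarrow> (nat \<times> nat) set \<Rightarrow> real mat" where
  "Tmat N E = mat (N - 1) (N - 1) (\<lambda>(j, l). Hmat N E $$ (j, l))"

definition theta :: "nat \<Rightarrow> (nat \<times> nat) set \<Rightarrow> nat \<Rightarrow> nat \<Rightarrow> real" where
  "theta N E j i = (if j < N - 1
     then minv (1\<^sub>m (N - 1) - Tmat N E) $$ (i, j) / real (deg E j) else 0)"

text \<open>Out-neighbours (called in-neighbours N^-_{ji} in the paper) of j in the directed graph G_i.\<close>
definition Nminus :: "nat \<Rightarrow> (nat \<times> nat) set \<Rightarrow> nat \<Rightarrow> nat \<Rightarrow> nat set" where
  "Nminus N E j i = {l. (j, l) \<in> E \<and> j < N - 1 \<and>
     (l = N - 1 \<or> (l < N - 1 \<and> theta N E j i > theta N E l i))}"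

definition eta :: "nat \<Rightarrow> (nat \<times> nat) set \<Rightarrow> nat \<Rightarrow> nat \<Rightarrow> nat \<Rightarrow> real" where
  "eta N E j l i = (theta N E j i - theta N E l i) /
     (\<Sum>l'\<in>Nminus N E j i. (theta N E j i - theta N E l' i))"

end

(*
  Let theta = theta_{.,i}.  It is the Green's function of the graph Laplacian
  (L f)_k = sum_{l ~ k} (f_k - f_l) with Dirichlet condition at the last node r:
  theta_r = 0 and (L theta)_k = [k = i] for k <> r, which is row i of
  (I - T)^{-1} (I - T) = I; and theta >= 0 by the minimum principle.  As L is
  self-adjoint, every f with f_r = 0 satisfies f_i = sum_k theta_k (L f)_k.

  The estimate qhat solves L qhat = sum_l d_{kl}, hence
  qhat_i = sum_{(k,l) in E} theta_k d_{kl} = sum_{(k,l) in G_i} (theta_k - theta_l) d_{kl},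
  because d is antisymmetric and G_i orients every edge downhill for theta.  For the
  solution qc the same representation gives qc_i = sum_{G_i} (theta_k - theta_l)(qc_k - qc_l),
  and the defining equations of qc, saying that qc_k is the (theta_k - theta_l)-weighted
  mean of qc_l + d_{kl} over the arcs leaving k, turn this into the same sum.
*)

theory Submission
  imports Defs "Jordan_Normal_Form.Determinant"
begin

definition laplacian :: "('a \<times> 'a) set \<Rightarrow> ('a \<Rightarrow> real) \<Rightarrow> 'a \<Rightarrow> real" where
  "laplacian E f k = (\<Sum>l | (k, l) \<in> E. f k - f l)"

definition downhill_orientation :: "('a \<times> 'a) set \<Rightarrow> ('a \<Rightarrow> real) \<Rightarrow> ('a \<times> 'a) set \<Rightarrow> bool" where
  "downhill_orientation E \<theta> P \<longleftrightarrow> P \<subseteq> E \<and> P \<inter> P\<inverse> = {} \<and>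
     (\<forall>(k, l) \<in> P. \<theta> l \<le> \<theta> k) \<and> (\<forall>(k, l) \<in> E. \<theta> l < \<theta> k \<longrightarrow> (k, l) \<in> P)"

lemma laplacian_uminus: "laplacian E (\<lambda>l. - f l) k = - laplacian E f k"
  by (simp add: laplacian_def sum_negf[symmetric])

lemma sum_sym_swap:
  assumes "sym S"
  shows "(\<Sum>(k, l)\<in>S. h k l) = (\<Sum>(k, l)\<in>S. h l k)"
proof -
  have "prod.swap ` S = S\<inverse>"
    by auto
  also have "\<dots> = S"
    using assms by (simp add: sym_conv_converse_eq)
  finally have "prod.swap ` S = S" .
  then have "(\<Sum>(k, l)\<in>S. h k l) = (\<Sum>(k, l)\<in>prod.swap ` S. h k l)"
    by simp
  also have "\<dots> = (\<Sum>(k, l)\<in>S. h l k)"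
    by (simp add: sum.reindex case_prod_unfold)
  finally show ?thesis .
qed

lemma weighted_mean_mult_sum:
  fixes a w :: "'a \<Rightarrow> 'b :: linordered_field"
  assumes "finite A" and "\<And>l. l \<in> A \<Longrightarrow> 0 \<le> w l"
  shows "(\<Sum>l\<in>A. a l * (w l / (\<Sum>l'\<in>A. w l'))) * (\<Sum>l\<in>A. w l) = (\<Sum>l\<in>A. a l * w l)"
proof (cases "(\<Sum>l\<in>A. w l) = 0")
  case True
  then have "\<forall>l\<in>A. w l = 0"
    using assms sum_nonneg_eq_0_iff by blast
  with True show ?thesis by simp
next
  case False
  then show ?thesis
    by (simp add: sum_distrib_right)
qed

lemma sum_Sigma_weighted_mean_eq:
  fixes q :: "'a \<Rightarrow> real" and c w :: "'a \<Rightarrow> 'a \<Rightarrow> real"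
  assumes "finite V" and "\<And>k. k \<in> V \<Longrightarrow> finite (A k)"
    and "\<And>k l. k \<in> V \<Longrightarrow> l \<in> A k \<Longrightarrow> 0 \<le> w k l"
    and "\<And>k. k \<in> V \<Longrightarrow> q k = (\<Sum>l\<in>A k. (q l + c k l) * (w k l / (\<Sum>l'\<in>A k. w k l')))"
  shows "(\<Sum>(k, l)\<in>Sigma V A. w k l * (q k - q l)) = (\<Sum>(k, l)\<in>Sigma V A. w k l * c k l)"
proof -
  have "(\<Sum>l\<in>A k. w k l * (q k - q l)) = (\<Sum>l\<in>A k. w k l * c k l)" if "k \<in> V" for k
  proof -
    have "q k * (\<Sum>l\<in>A k. w k l) = (\<Sum>l\<in>A k. (q l + c k l) * w k l)"
      using assms(4)[OF that] weighted_mean_mult_sum[OF assms(2,3)[OF that]] by simp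
    then show ?thesis
      by (simp add: algebra_simps sum.distrib sum_subtractf sum_distrib_left)
  qed
  then show ?thesis
    using assms(1,2) by (simp add: sum.Sigma[symmetric])
qed

locale finite_sym_graph =
  fixes V :: "'a set" and E :: "('a \<times> 'a) set"
  assumes finite_vertices: "finite V"
    and edges_subset: "E \<subseteq> V \<times> V"
    and sym_edges: "sym E"
begin

lemma finite_neighbours: "finite {l. (k, l) \<in> E}"
  using edges_subset by (intro finite_subset[OF _ finite_vertices]) auto

lemma sum_neighbours_eq: "(\<Sum>l | (k, l) \<in> E. f l) = (\<Sum>l\<in>V. if (k, l) \<in> E then f l else 0)"
proof -
  have "{l. (k, l) \<in> E} = {l \<in> V. (k, l) \<in> E}"
    using edges_subset by auto
  then show ?thesis
    by (simp add: sum.inter_filter[OF finite_vertices])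
qed

lemma sum_vertices_neighbours: "(\<Sum>k\<in>V. \<Sum>l | (k, l) \<in> E. h k l) = (\<Sum>(k, l)\<in>E. h k l)"
proof -
  have "E = (SIGMA k:V. {l. (k, l) \<in> E})"
    using edges_subset by auto
  then show ?thesis
    using finite_vertices finite_neighbours by (simp add: sum.Sigma)
qed

lemma sum_mult_laplacian_commute:
  "(\<Sum>k\<in>V. \<phi> k * laplacian E \<psi> k) = (\<Sum>k\<in>V. \<psi> k * laplacian E \<phi> k)"
proof -
  have "(\<Sum>k\<in>V. \<phi> k * laplacian E \<psi> k) - (\<Sum>k\<in>V. \<psi> k * laplacian E \<phi> k)
      = (\<Sum>(k, l)\<in>E. \<psi> k * \<phi> l) - (\<Sum>(k, l)\<in>E. \<psi> l * \<phi> k)"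
    unfolding laplacian_def sum_distrib_left sum_vertices_neighbours sum_subtractf[symmetric]
    by (intro sum.cong) (auto simp: algebra_simps)
  also have "\<dots> = 0"
    using sum_sym_swap[OF sym_edges, of "\<lambda>k l. \<psi> k * \<phi> l"] by simp
  finally show ?thesis by simp
qed

text \<open>\<open>E\<close> splits into \<open>P\<close>, its reverse and the edges on which \<open>\<theta>\<close> is constant;
  by antisymmetry of \<open>g\<close> the latter cancel in pairs.\<close>
lemma sum_edges_downhill:
  assumes P: "downhill_orientation E \<theta> P"
    and g_antisym: "\<And>k l. (k, l) \<in> E \<Longrightarrow> g l k = - g k l"
  shows "(\<Sum>(k, l)\<in>E. \<theta> k * g k l) = (\<Sum>(k, l)\<in>P. (\<theta> k - \<theta> l) * g k l)"
proof -
  define Z where "Z = E - (P \<union> P\<inverse>)"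
  have fin: "finite E"
    using edges_subset finite_vertices by (meson finite_SigmaI finite_subset)
  have PE: "P \<subseteq> E" and disj: "P \<inter> P\<inverse> = {}"
    using P by (auto simp: downhill_orientation_def)
  have P'E: "P\<inverse> \<subseteq> E"
    using PE sym_edges by (auto simp: sym_def)
  have Z_flat: "\<theta> k = \<theta> l" if "(k, l) \<in> Z" for k l
  proof -
    have downhill: "(a, b) \<in> P" if "(a, b) \<in> E" "\<theta> b < \<theta> a" for a b
      using P that by (auto simp: downhill_orientation_def)
    have "(l, k) \<in> E"
      using that sym_edges by (auto simp: Z_def sym_def)
    then have "\<not> \<theta> l < \<theta> k" "\<not> \<theta> k < \<theta> l"
      using that downhill[of k l] downhill[of l k] by (auto simp: Z_def)
    then show ?thesis
      by simp
  qed
  have "sym Z"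
    using sym_edges unfolding Z_def sym_def by blast
  then have "(\<Sum>(k, l)\<in>Z. \<theta> k * g k l) = (\<Sum>(k, l)\<in>Z. \<theta> l * g l k)"
    by (rule sum_sym_swap)
  also have "\<dots> = (\<Sum>(k, l)\<in>Z. - (\<theta> k * g k l))"
    using Z_flat g_antisym unfolding Z_def by (intro sum.cong refl) fastforce
  also have "\<dots> = - (\<Sum>(k, l)\<in>Z. \<theta> k * g k l)"
    by (simp add: sum_negf case_prod_unfold)
  finally have Z0: "(\<Sum>(k, l)\<in>Z. \<theta> k * g k l) = 0" by simp
  have "P\<inverse> = prod.swap ` P"
    by auto
  then have "(\<Sum>(k, l)\<in>P\<inverse>. \<theta> k * g k l) = (\<Sum>(k, l)\<in>P. \<theta> l * g l k)"
    by (simp add: sum.reindex case_prod_unfold)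
  also have "\<dots> = (\<Sum>(k, l)\<in>P. - \<theta> l * g k l)"
    using PE g_antisym by (intro sum.cong) auto
  finally have P'sum: "(\<Sum>(k, l)\<in>P\<inverse>. \<theta> k * g k l) = (\<Sum>(k, l)\<in>P. - \<theta> l * g k l)" .
  have "(\<Sum>(k, l)\<in>E. \<theta> k * g k l) = (\<Sum>(k, l)\<in>Z. \<theta> k * g k l) + (\<Sum>(k, l)\<in>P \<union> P\<inverse>. \<theta> k * g k l)"
    unfolding Z_def using fin PE P'E by (intro sum.subset_diff) auto
  also have "(\<Sum>(k, l)\<in>P \<union> P\<inverse>. \<theta> k * g k l) = (\<Sum>(k, l)\<in>P. \<theta> k * g k l) + (\<Sum>(k, l)\<in>P\<inverse>. \<theta> k * g k l)"
    using fin PE P'E disj by (intro sum.union_disjoint) (auto intro: finite_subset)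
  also have "\<dots> = (\<Sum>(k, l)\<in>P. (\<theta> k - \<theta> l) * g k l)"
    unfolding P'sum by (simp add: sum.distrib[symmetric] case_prod_unfold algebra_simps)
  finally show ?thesis
    using Z0 by simp
qed

lemma green_representation:
  assumes "r \<in> V" "i \<in> V" "i \<noteq> r" "\<phi> r = 0"
    and green: "\<And>k. k \<in> V \<Longrightarrow> k \<noteq> r \<Longrightarrow> laplacian E \<theta> k = of_bool (k = i)"
  shows "\<phi> i = (\<Sum>k\<in>V. \<theta> k * laplacian E \<phi> k)"
proof -
  have "\<phi> i = (\<Sum>k\<in>V. \<phi> k * of_bool (k = i))"
    using assms(2) finite_vertices by simp
  also have "\<dots> = (\<Sum>k\<in>V. \<phi> k * laplacian E \<theta> k)"
  proof (intro sum.cong refl)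
    fix k assume "k \<in> V"
    then show "\<phi> k * of_bool (k = i) = \<phi> k * laplacian E \<theta> k"
      using green \<open>\<phi> r = 0\<close> by (cases "k = r") auto
  qed
  also have "\<dots> = (\<Sum>k\<in>V. \<theta> k * laplacian E \<phi> k)"
    by (rule sum_mult_laplacian_commute)
  finally show ?thesis .
qed

lemma green_downhill_representation:
  assumes "r \<in> V" "i \<in> V" "i \<noteq> r" "\<theta> r = 0" "\<phi> r = 0"
    and green: "\<And>k. k \<in> V \<Longrightarrow> k \<noteq> r \<Longrightarrow> laplacian E \<theta> k = of_bool (k = i)"
    and P: "downhill_orientation E \<theta> P"
    and \<phi>_laplacian: "\<And>k. k \<in> V \<Longrightarrow> k \<noteq> r \<Longrightarrow> laplacian E \<phi> k = (\<Sum>l | (k, l) \<in> E. g k l)"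
    and g_antisym: "\<And>k l. (k, l) \<in> E \<Longrightarrow> g l k = - g k l"
  shows "\<phi> i = (\<Sum>(k, l)\<in>P. (\<theta> k - \<theta> l) * g k l)"
proof -
  have "\<phi> i = (\<Sum>k\<in>V. \<theta> k * laplacian E \<phi> k)"
    using assms(1-3,5) green by (rule green_representation)
  also have "\<dots> = (\<Sum>k\<in>V. \<theta> k * (\<Sum>l | (k, l) \<in> E. g k l))"
    using \<phi>_laplacian \<open>\<theta> r = 0\<close> by (intro sum.cong) auto
  also have "\<dots> = (\<Sum>(k, l)\<in>E. \<theta> k * g k l)"
    by (simp add: sum_distrib_left sum_vertices_neighbours)
  also have "\<dots> = (\<Sum>(k, l)\<in>P. (\<theta> k - \<theta> l) * g k l)"
    using P g_antisym by (rule sum_edges_downhill)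
  finally show ?thesis .
qed

end

locale connected_graph = finite_sym_graph +
  assumes connected: "\<And>u v. u \<in> V \<Longrightarrow> v \<in> V \<Longrightarrow> (u, v) \<in> E\<^sup>*"
begin

lemma minimum_principle:
  assumes "r \<in> V" "0 \<le> \<phi> r"
    and superharmonic: "\<And>k. k \<in> V \<Longrightarrow> k \<noteq> r \<Longrightarrow> 0 \<le> laplacian E \<phi> k"
    and "k \<in> V"
  shows "0 \<le> \<phi> k"
proof (rule ccontr)
  assume "\<not> 0 \<le> \<phi> k"
  define m where "m = Min (\<phi> ` V)"
  have m_le: "m \<le> \<phi> v" if "v \<in> V" for v
    using finite_vertices that by (simp add: m_def)
  have "m \<in> \<phi> ` V"
    unfolding m_def using finite_vertices \<open>k \<in> V\<close> by (intro Min_in) auto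
  then obtain k0 where "k0 \<in> V" "\<phi> k0 = m"
    by auto
  have "m < 0"
    using m_le[OF \<open>k \<in> V\<close>] \<open>\<not> 0 \<le> \<phi> k\<close> by simp
  have "\<phi> v = m" if "(k0, v) \<in> E\<^sup>*" for v
    using that
  proof (induction rule: rtrancl_induct)
    case base
    show ?case using \<open>\<phi> k0 = m\<close> .
  next
    case (step v w)
    have "v \<in> V" "w \<in> V"
      using step.hyps(2) edges_subset by auto
    have "v \<noteq> r"
      using step.IH \<open>m < 0\<close> \<open>0 \<le> \<phi> r\<close> by auto
    have nonneg: "0 \<le> \<phi> l - m" if "l \<in> {l. (v, l) \<in> E}" for l
      using m_le that edges_subset by auto
    have "(\<Sum>l | (v, l) \<in> E. \<phi> l - m) \<le> 0"
      using superharmonic[OF \<open>v \<in> V\<close> \<open>v \<noteq> r\<close>] step.IH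
      by (simp add: laplacian_def sum_subtractf)
    moreover have "0 \<le> (\<Sum>l | (v, l) \<in> E. \<phi> l - m)"
      using nonneg by (rule sum_nonneg)
    ultimately have "(\<Sum>l | (v, l) \<in> E. \<phi> l - m) = 0"
      by linarith
    then have "\<forall>l \<in> {l. (v, l) \<in> E}. \<phi> l - m = 0"
      using sum_nonneg_eq_0_iff[OF finite_neighbours[of v], of "\<lambda>l. \<phi> l - m"] nonneg by blast
    then show ?case
      using step.hyps(2) by simp
  qed
  then have "\<phi> r = m"
    using connected[OF \<open>k0 \<in> V\<close> \<open>r \<in> V\<close>] .
  with \<open>m < 0\<close> \<open>0 \<le> \<phi> r\<close> show False by simp
qed

lemma harmonic_eq_zero:
  assumes "r \<in> V" "\<phi> r = 0"
    and harmonic: "\<And>k. k \<in> V \<Longrightarrow> k \<noteq> r \<Longrightarrow> laplacian E \<phi> k = 0"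
    and "k \<in> V"
  shows "\<phi> k = 0"
proof -
  have "0 \<le> \<phi> k"
    by (rule minimum_principle[of r]) (use assms in auto)
  moreover have "0 \<le> - \<phi> k"
    by (rule minimum_principle[of r "\<lambda>l. - \<phi> l"]) (use assms in \<open>auto simp: laplacian_uminus\<close>)
  ultimately show ?thesis
    by simp
qed

end

lemma laplacian_deg: "laplacian E f k = real (deg E k) * f k - (\<Sum>l | (k, l) \<in> E. f l)"
  by (simp add: laplacian_def deg_def sum_subtractf)

lemma Mmat_carrier: "Mmat N E \<in> carrier_mat N N"
  unfolding Mmat_def Hmat_def by (intro minus_carrier_mat mat_carrier)

lemma Mmat_index:
  "k < N \<Longrightarrow> l < N \<Longrightarrow> Mmat N E $$ (k, l) =
     (if k = l then 1 else 0) - (if k < N - 1 \<and> (k, l) \<in> E then 1 / real (deg E k) else 0)"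
  by (simp add: Mmat_def Hmat_def)

lemma reduced_Mmat_carrier: "1\<^sub>m (N - 1) - Tmat N E \<in> carrier_mat (N - 1) (N - 1)"
  unfolding Tmat_def by (intro minus_carrier_mat mat_carrier)

lemma reduced_Mmat_index:
  "j < N - 1 \<Longrightarrow> l < N - 1 \<Longrightarrow> (1\<^sub>m (N - 1) - Tmat N E) $$ (j, l) = Mmat N E $$ (j, l)"
  by (simp add: Tmat_def Mmat_def Hmat_def)

lemma minv_inverse:
  assumes A: "A \<in> carrier_mat n n"
    and inj: "\<And>v. v \<in> carrier_vec n \<Longrightarrow> A *\<^sub>v v = 0\<^sub>v n \<Longrightarrow> v = 0\<^sub>v n"
  shows "minv A \<in> carrier_mat n n" "A * minv A = 1\<^sub>m n" "minv A * A = 1\<^sub>m n"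
proof -
  have "det A \<noteq> 0"
    using det_0_iff_vec_prod_zero[OF A] inj by blast
  then have "mat_inverse A \<noteq> None"
    using mat_inverse(1)[OF A] det_non_zero_imp_unit[OF A] by metis
  then obtain B where B: "mat_inverse A = Some B"
    by auto
  then show "minv A \<in> carrier_mat n n" "A * minv A = 1\<^sub>m n" "minv A * A = 1\<^sub>m n"
    using mat_inverse(2)[OF A B] by (simp_all add: minv_def)
qed

lemma theta_root: "N - 1 \<le> j \<Longrightarrow> theta N E j i = 0"
  by (simp add: theta_def)

lemma Nminus_root: "N - 1 \<le> j \<Longrightarrow> Nminus N E j i = {}"
  by (simp add: Nminus_def)

locale rooted_graph = connected_graph "{..<N}" E for N :: nat and E +
  assumes nontrivial: "1 < N"
begin

lemma deg_pos:
  assumes "k < N"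
  shows "0 < deg E k"
proof -
  obtain u where "u < N" "u \<noteq> k"
    using nontrivial by (metis One_nat_def less_one not_less_iff_gr_or_eq order_less_trans zero_less_one)
  then obtain w where "(k, w) \<in> E"
    using connected[of k u] assms by (metis converse_rtranclE lessThan_iff)
  then show ?thesis
    using finite_neighbours unfolding deg_def by (auto simp: card_gt_0_iff)
qed

lemma Mmat_mult_vec:
  assumes "x \<in> carrier_vec N" "k < N"
  shows "(Mmat N E *\<^sub>v x) $ k =
    (if k < N - 1 then laplacian E (($) x) k / real (deg E k) else x $ k)"
proof -
  have neighbours: "(\<Sum>l<N. if k < N - 1 \<and> (k, l) \<in> E then x $ l / real (deg E k) else 0)
      = (if k < N - 1 then (\<Sum>l | (k, l) \<in> E. x $ l) / real (deg E k) else 0)"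
    by (auto simp: sum_divide_distrib sum_neighbours_eq intro: sum.cong)
  have "(Mmat N E *\<^sub>v x) $ k = (\<Sum>l<N. Mmat N E $$ (k, l) * x $ l)"
    using assms Mmat_carrier[of N E] by (simp add: scalar_prod_def atLeast0LessThan)
  also have "\<dots> = (\<Sum>l<N. (if k = l then x $ l else 0)
      - (if k < N - 1 \<and> (k, l) \<in> E then x $ l / real (deg E k) else 0))"
    using assms(2) by (intro sum.cong refl) (simp add: Mmat_index left_diff_distrib)
  also have "\<dots> = x $ k - (if k < N - 1 then (\<Sum>l | (k, l) \<in> E. x $ l) / real (deg E k) else 0)"
    unfolding sum_subtractf neighbours using assms(2) by simp
  also have "\<dots> = (if k < N - 1 then laplacian E (($) x) k / real (deg E k) else x $ k)"
    using deg_pos[OF assms(2)] by (simp add: laplacian_deg field_simps)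
  finally show ?thesis .
qed

lemma Mmat_injective:
  assumes x: "x \<in> carrier_vec N" and Mx: "Mmat N E *\<^sub>v x = 0\<^sub>v N"
  shows "x = 0\<^sub>v N"
proof -
  have last: "x $ (N - 1) = 0"
    using Mmat_mult_vec[OF x, of "N - 1"] Mx nontrivial by simp
  have "laplacian E (($) x) k = 0" if "k < N - 1" for k
  proof -
    have "k < N"
      using that by simp
    then show ?thesis
      using Mmat_mult_vec[OF x \<open>k < N\<close>] Mx deg_pos[OF \<open>k < N\<close>] that by simp
  qed
  then have "x $ k = 0" if "k < N" for k
    using harmonic_eq_zero[of "N - 1" "($) x" k] last that nontrivial by simp
  then show ?thesis
    using x by (intro eq_vecI) auto
qed

lemma Mmat_minv:
  shows Mmat_minv_carrier: "minv (Mmat N E) \<in> carrier_mat N N"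
    and Mmat_mult_minv: "Mmat N E * minv (Mmat N E) = 1\<^sub>m N"
  using minv_inverse[OF Mmat_carrier[of N E] Mmat_injective] by auto

lemma hadamard_mult_ones_vec:
  assumes "k < N"
  shows "(hadamard (Hmat N E) (Dmat N d) *\<^sub>v ones_vec N) $ k =
    (if k < N - 1 then (\<Sum>l | (k, l) \<in> E. d k l) / real (deg E k) else 0)"
proof -
  have "(hadamard (Hmat N E) (Dmat N d) *\<^sub>v ones_vec N) $ k =
      (\<Sum>l<N. if k < N - 1 \<and> (k, l) \<in> E then d k l / real (deg E k) else 0)"
    using assms
    by (auto simp: hadamard_def Hmat_def Dmat_def ones_vec_def scalar_prod_def atLeast0LessThan
        intro!: sum.cong)
  also have "\<dots> = (if k < N - 1 then (\<Sum>l | (k, l) \<in> E. d k l) / real (deg E k) else 0)"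
    by (auto simp: sum_divide_distrib sum_neighbours_eq intro: sum.cong)
  finally show ?thesis .
qed

lemma qhat_dirichlet:
  shows qhat_last: "qhat N E d $ (N - 1) = 0"
    and qhat_laplacian: "k < N - 1 \<Longrightarrow> laplacian E (($) (qhat N E d)) k = (\<Sum>l | (k, l) \<in> E. d k l)"
proof -
  define c where "c = hadamard (Hmat N E) (Dmat N d) *\<^sub>v ones_vec N"
  have c: "c \<in> carrier_vec N"
    unfolding c_def hadamard_def Hmat_def carrier_vec_def by simp
  have q: "qhat N E d = minv (Mmat N E) *\<^sub>v c"
    by (simp add: qhat_def c_def)
  have q_carrier: "qhat N E d \<in> carrier_vec N"
    unfolding q using Mmat_minv_carrier c by simp
  have "Mmat N E *\<^sub>v qhat N E d = (Mmat N E * minv (Mmat N E)) *\<^sub>v c"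
    unfolding q by (rule assoc_mult_mat_vec[symmetric, OF Mmat_carrier Mmat_minv_carrier c])
  also have "\<dots> = c"
    using c by (simp add: Mmat_mult_minv)
  finally have Mq: "(Mmat N E *\<^sub>v qhat N E d) $ k = c $ k" for k
    by simp
  show "qhat N E d $ (N - 1) = 0"
    using Mq[of "N - 1"] Mmat_mult_vec[OF q_carrier, of "N - 1"] hadamard_mult_ones_vec[of "N - 1"]
      nontrivial by (simp add: c_def)
  show "laplacian E (($) (qhat N E d)) k = (\<Sum>l | (k, l) \<in> E. d k l)" if "k < N - 1"
  proof -
    have "k < N"
      using that by simp
    then show ?thesis
      using Mq[of k] Mmat_mult_vec[OF q_carrier \<open>k < N\<close>] hadamard_mult_ones_vec[OF \<open>k < N\<close>]
        deg_pos[OF \<open>k < N\<close>] that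
      by (simp add: c_def)
  qed
qed

lemma reduced_Mmat_injective:
  assumes y: "y \<in> carrier_vec (N - 1)" and Ay: "(1\<^sub>m (N - 1) - Tmat N E) *\<^sub>v y = 0\<^sub>v (N - 1)"
  shows "y = 0\<^sub>v (N - 1)"
proof -
  define z where "z = vec N (\<lambda>l. if l < N - 1 then y $ l else 0)"
  have N: "N = Suc (N - 1)"
    using nontrivial by simp
  have z: "z \<in> carrier_vec N"
    by (simp add: z_def)
  have z_last: "z $ (N - 1) = 0"
    using nontrivial by (simp add: z_def)
  have inner: "(Mmat N E *\<^sub>v z) $ k = 0" if "k < N - 1" for k
  proof -
    have "(Mmat N E *\<^sub>v z) $ k = (\<Sum>l<N. Mmat N E $$ (k, l) * z $ l)"
      using that Mmat_carrier[of N E] by (simp add: z_def scalar_prod_def atLeast0LessThan)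
    also have "\<dots> = (\<Sum>l<N - 1. Mmat N E $$ (k, l) * z $ l)"
      using sum.lessThan_Suc[of "\<lambda>l. Mmat N E $$ (k, l) * z $ l" "N - 1"] z_last N by simp
    also have "\<dots> = (\<Sum>l<N - 1. (1\<^sub>m (N - 1) - Tmat N E) $$ (k, l) * y $ l)"
    proof (intro sum.cong refl)
      fix l assume "l \<in> {..<N - 1}"
      then show "Mmat N E $$ (k, l) * z $ l = (1\<^sub>m (N - 1) - Tmat N E) $$ (k, l) * y $ l"
        using reduced_Mmat_index[OF that, of l] by (simp add: z_def)
    qed
    also have "\<dots> = ((1\<^sub>m (N - 1) - Tmat N E) *\<^sub>v y) $ k"
      using that y carrier_matD[OF reduced_Mmat_carrier[of N E]]
      by (simp add: scalar_prod_def atLeast0LessThan)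
    finally show ?thesis
      using Ay that by simp
  qed
  have last: "(Mmat N E *\<^sub>v z) $ (N - 1) = 0"
    using Mmat_mult_vec[OF z, of "N - 1"] z_last nontrivial by simp
  have "Mmat N E *\<^sub>v z = 0\<^sub>v N"
  proof (rule eq_vecI)
    fix k assume "k < dim_vec (0\<^sub>v N :: real vec)"
    then have "k < N - 1 \<or> k = N - 1"
      by auto
    then show "(Mmat N E *\<^sub>v z) $ k = 0\<^sub>v N $ k"
      using inner last \<open>k < dim_vec (0\<^sub>v N :: real vec)\<close> by auto
  qed (use Mmat_carrier[of N E] in simp)
  then have "z = 0\<^sub>v N"
    using Mmat_injective[OF z] by simp
  have "y $ l = 0" if "l < N - 1" for l
  proof -
    have "z $ l = 0"
      using \<open>z = 0\<^sub>v N\<close> that by simp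
    then show ?thesis
      using that by (simp add: z_def)
  qed
  then show ?thesis
    using y by (intro eq_vecI) auto
qed

lemma reduced_Mmat_minv:
  shows "minv (1\<^sub>m (N - 1) - Tmat N E) \<in> carrier_mat (N - 1) (N - 1)"
    and "minv (1\<^sub>m (N - 1) - Tmat N E) * (1\<^sub>m (N - 1) - Tmat N E) = 1\<^sub>m (N - 1)"
  using minv_inverse[OF reduced_Mmat_carrier[of N E] reduced_Mmat_injective] by auto

lemma theta_laplacian:
  assumes "i < N - 1" "k < N - 1"
  shows "laplacian E (\<lambda>j. theta N E j i) k = of_bool (k = i)"
proof -
  define A where "A = 1\<^sub>m (N - 1) - Tmat N E"
  define G where "G = minv A"
  define \<theta> where "\<theta> = (\<lambda>j. theta N E j i)"
  have G: "G \<in> carrier_mat (N - 1) (N - 1)" "G * A = 1\<^sub>m (N - 1)"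
    using reduced_Mmat_minv unfolding G_def A_def by auto
  have A: "A \<in> carrier_mat (N - 1) (N - 1)"
    unfolding A_def by (rule reduced_Mmat_carrier)
  have \<theta>_G: "\<theta> j = G $$ (i, j) / real (deg E j)" if "j < N - 1" for j
    using that by (simp add: \<theta>_def theta_def G_def A_def)
  have "of_bool (k = i) = (G * A) $$ (i, k)"
    using G assms by auto
  also have "\<dots> = (\<Sum>j<N - 1. G $$ (i, j) * A $$ (j, k))"
    using G(1) A assms by (simp add: scalar_prod_def atLeast0LessThan)
  also have "\<dots> = (\<Sum>j<N - 1. (if j = k then G $$ (i, j) else 0) - (if (k, j) \<in> E then \<theta> j else 0))"
  proof (intro sum.cong refl)
    fix j assume "j \<in> {..<N - 1}"
    then have "j < N - 1" by simp
    moreover have "(j, k) \<in> E \<longleftrightarrow> (k, j) \<in> E"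
      using sym_edges by (auto simp: sym_def)
    ultimately show "G $$ (i, j) * A $$ (j, k) = (if j = k then G $$ (i, j) else 0) - (if (k, j) \<in> E then \<theta> j else 0)"
      using assms reduced_Mmat_index[OF \<open>j < N - 1\<close> assms(2)] Mmat_index[of j N k E] \<theta>_G[OF \<open>j < N - 1\<close>]
      by (simp add: A_def right_diff_distrib)
  qed
  also have "\<dots> = G $$ (i, k) - (\<Sum>j | (k, j) \<in> E. \<theta> j)"
  proof -
    have N: "N = Suc (N - 1)"
      using assms by simp
    have "(\<Sum>j | (k, j) \<in> E. \<theta> j) = (\<Sum>j<N. if (k, j) \<in> E then \<theta> j else 0)"
      by (rule sum_neighbours_eq)
    also have "\<dots> = (\<Sum>j<N - 1. if (k, j) \<in> E then \<theta> j else 0)"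
      using sum.lessThan_Suc[of "\<lambda>j. if (k, j) \<in> E then \<theta> j else 0" "N - 1"] N
      by (simp add: \<theta>_def theta_root)
    finally show ?thesis
      using assms by (simp add: sum_subtractf)
  qed
  also have "\<dots> = laplacian E \<theta> k"
    using \<theta>_G[OF assms(2)] deg_pos[of k] assms by (simp add: laplacian_deg)
  finally show ?thesis
    by (simp add: \<theta>_def)
qed

lemma theta_nonneg:
  assumes "i < N - 1" "j < N"
  shows "0 \<le> theta N E j i"
proof (rule minimum_principle[of "N - 1" "\<lambda>j. theta N E j i" j])
  fix k assume "k \<in> {..<N}" "k \<noteq> N - 1"
  then show "0 \<le> laplacian E (\<lambda>j. theta N E j i) k"
    using theta_laplacian[OF assms(1), of k] by simp
qed (use assms in \<open>simp_all add: theta_root\<close>)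

lemma Nminus_downhill_orientation:
  assumes "i < N - 1"
  shows "downhill_orientation E (\<lambda>j. theta N E j i) (SIGMA k:{..<N}. Nminus N E k i)"
proof -
  have "theta N E l i \<le> theta N E k i" if "l \<in> Nminus N E k i" "k < N" for k l
    using that theta_nonneg[OF assms, of k] by (auto simp: Nminus_def theta_root)
  moreover have "l \<in> Nminus N E k i" if "(k, l) \<in> E" "theta N E l i < theta N E k i" for k l
  proof -
    have "k < N" "l < N"
      using that edges_subset by auto
    moreover have "k \<noteq> N - 1"
      using that theta_nonneg[OF assms \<open>l < N\<close>] by (auto simp: theta_root)
    ultimately show ?thesis
      using that by (auto simp: Nminus_def)
  qed
  moreover have "Nminus N E k i \<subseteq> {l. (k, l) \<in> E}" for k
    by (auto simp: Nminus_def)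
  moreover have "k \<notin> Nminus N E l i" if "l \<in> Nminus N E k i" for k l
    using that by (auto simp: Nminus_def)
  ultimately show ?thesis
    using edges_subset unfolding downhill_orientation_def by fastforce
qed

lemma sum_Nminus_weighted_means:
  assumes "i < N - 1" "q (N - 1) = 0"
    and q_eq: "\<And>j. j < N - 1 \<Longrightarrow> q j = (\<Sum>l\<in>Nminus N E j i. (q l + d j l) * eta N E j l i)"
  shows "(\<Sum>(k, l)\<in>(SIGMA k:{..<N}. Nminus N E k i). (theta N E k i - theta N E l i) * d k l)
    = (\<Sum>(k, l)\<in>(SIGMA k:{..<N}. Nminus N E k i). (theta N E k i - theta N E l i) * (q k - q l))"
proof (rule sum_Sigma_weighted_mean_eq[symmetric])
  fix k assume "k \<in> {..<N}"
  show "q k = (\<Sum>l\<in>Nminus N E k i. (q l + d k l) *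
      ((theta N E k i - theta N E l i) / (\<Sum>l'\<in>Nminus N E k i. theta N E k i - theta N E l' i)))"
  proof (cases "k < N - 1")
    case True
    then show ?thesis
      using q_eq[OF True] by (simp add: eta_def)
  next
    case False
    then have "k = N - 1"
      using \<open>k \<in> {..<N}\<close> by simp
    then show ?thesis
      using assms(2) by (simp add: Nminus_root)
  qed
qed (use Nminus_downhill_orientation[OF assms(1)] finite_neighbours
      in \<open>auto simp: downhill_orientation_def Nminus_def intro: finite_subset\<close>)

end

theorem proposition4:
  fixes N :: nat and E :: "(nat \<times> nat) set" and d :: "nat \<Rightarrow> nat \<Rightarrow> real"
    and i :: nat and qc :: "nat \<Rightarrow> real"
  assumes E_sub: "E \<subseteq> {..<N} \<times> {..<N}"
    and E_sym: "\<And>j l. (j, l) \<in> E \<Longrightarrow> (l, j) \<in> E"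
    and E_irrefl: "\<And>j. (j, j) \<notin> E"
    and connected: "\<And>u v. u < N \<Longrightarrow> v < N \<Longrightarrow> (u, v) \<in> E\<^sup>*"
    and d_antisym: "\<And>j l. (j, l) \<in> E \<Longrightarrow> d l j = - d j l"
    and i_range: "i < N - 1"
    and qc_last: "qc (N - 1) = 0"
    and qc_eq: "\<And>j. j < N - 1 \<Longrightarrow>
        qc j = (\<Sum>l\<in>Nminus N E j i. (qc l + d j l) * eta N E j l i)"
  shows "qhat N E d $ i = qc i"
proof -
  interpret rooted_graph N E
    by unfold_locales (use E_sub E_sym connected i_range in \<open>auto intro: symI\<close>)
  define \<theta> where "\<theta> = (\<lambda>j. theta N E j i)"
  define P where "P = (SIGMA k:{..<N}. Nminus N E k i)"
  have root: "N - 1 \<in> {..<N}" "i \<in> {..<N}" "i \<noteq> N - 1" "\<theta> (N - 1) = 0"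
    using i_range by (auto simp: \<theta>_def theta_root)
  have green: "laplacian E \<theta> k = of_bool (k = i)" if "k \<in> {..<N}" "k \<noteq> N - 1" for k
    using theta_laplacian[OF i_range, of k] that by (simp add: \<theta>_def)
  have downhill: "downhill_orientation E \<theta> P"
    unfolding \<theta>_def P_def using i_range by (rule Nminus_downhill_orientation)
  have "qhat N E d $ i = (\<Sum>(k, l)\<in>P. (\<theta> k - \<theta> l) * d k l)"
    using root green downhill qhat_last qhat_laplacian d_antisym
    by (intro green_downhill_representation[of "N - 1"]) auto
  also have "\<dots> = (\<Sum>(k, l)\<in>P. (\<theta> k - \<theta> l) * (qc k - qc l))"
    unfolding \<theta>_def P_def using i_range qc_last qc_eq by (rule sum_Nminus_weighted_means)
  also have "\<dots> = qc i"
    using root green downhill qc_last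
    by (intro green_downhill_representation[of "N - 1", symmetric]) (auto simp: laplacian_def)
  finally show ?thesis .
qed

end
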